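(* Let $((A,\to),\mathrm{obs})$ be a quantitative abstract rewriting system with $\mathrm{obs}:A\to S$, and let $\rightsquigarrow\ \subseteq\ \to$ be a subrelation. Let $t\in A$ and assume: (i) $\rightsquigarrow$ is asymptotically complete for $\to$; (ii) $\mathrm{Lim}(t,\rightsquigarrow)$ contains a unique element, i.e. $\mathrm{Lim}(t,\rightsquigarrow)=\{\mathbf p\}$ for some $\mathbf p\in S$. Then (1) $[\![t]\!]$ is defined, and (2) every maximal $\rightsquigarrow$-sequence from $t$ has limit $[\![t]\!]$, i.e. $t\rightsquigarrow^{\mathrm{obs}}[\![t]\!]$ along each such sequence.
   Context: An abstract rewriting system (ARS) is a pair $(A,\to)$ with $\to\subseteq A\times A$. A $\to$-sequence from $t$ is a finite or infinite sequence $t=t_0\to t_1\to t_2\to\cdots$; it is maximal if it is infinite or ends in a $\to$-normal form (an element with no $\to$-successor); by convention a maximal sequence ending in a normal form $u$ is continued as the constant sequence $u,u,\dots$. An $\omega$-cpo is a poset $(S,\le)$ with least element $\bot$ in which every $\omega$-chain has a supremum. A quantitative ARS (QARS) is $((A,\to),\mathrm{obs})$ where $\mathrm{obs}:A\to S$ maps into an $\omega$-cpo and $t\to s$ implies $\mathrm{obs}(t)\le\mathrm{obs}(s)$. For a relation $R\subseteq\to$ write $t\,R^{\mathrm{obs}}\,\mathbf p$ if there is a maximal $R$-sequence $(t_n)_n$ from $t$ with $\sup_n\mathrm{obs}(t_n)=\mathbf p$; $\mathrm{Lim}(t,R)=\{\mathbf p\mid t\,R^{\mathrm{obs}}\,\mathbf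 p\}$. $[\![t]\!]$ denotes the greatest element of $\mathrm{Lim}(t,\to)$, and is said to be defined when this greatest element exists. A subrelation $\rightsquigarrow\subseteq\to$ is asymptotically complete for $\to$ if for all $t\in A$: $t\to^{\mathrm{obs}}\mathbf q$ implies $t\rightsquigarrow^{\mathrm{obs}}\mathbf p$ for some $\mathbf p$ with $\mathbf q\le\mathbf p$. *)

theory Defs
  imports Main
begin

definition is_lub :: "'b::order set \<Rightarrow> 'b \<Rightarrow> bool" where
  "is_lub X p \<longleftrightarrow> (\<forall>x\<in>X. x \<le> p) \<and> (\<forall>q. (\<forall>x\<in>X. x \<le> q) \<longrightarrow> p \<le> q)"

definition omega_cpo :: "'b::order itself \<Rightarrow> bool" where
  "omega_cpo _ \<longleftrightarrow> (\<exists>b::'b. \<forall>x. b \<le> x) \<and>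
     (\<forall>f::nat \<Rightarrow> 'b. (\<forall>n. f n \<le> f (Suc n)) \<longrightarrow> (\<exists>p. is_lub (range f) p))"

definition qars :: "('a \<Rightarrow> 'a \<Rightarrow> bool) \<Rightarrow> ('a \<Rightarrow> 'b::order) \<Rightarrow> bool" where
  "qars step obs \<longleftrightarrow> omega_cpo TYPE('b) \<and> (\<forall>x y. step x y \<longrightarrow> obs x \<le> obs y)"

definition normal_form :: "('a \<Rightarrow> 'a \<Rightarrow> bool) \<Rightarrow> 'a \<Rightarrow> bool" where
  "normal_form R x \<longleftrightarrow> \<not> (\<exists>y. R x y)"

(* maximal R-sequence from t; a finite one ending in a normal form is continued constantly *)
definition max_seq :: "('a \<Rightarrow> 'a \<Rightarrow> bool) \<Rightarrow> 'a \<Rightarrow> (nat \<Rightarrow> 'a) \<Rightarrow> bool" where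
  "max_seq R t f \<longleftrightarrow> f 0 = t \<and>
     (\<forall>n. R (f n) (f (Suc n)) \<or> (normal_form R (f n) \<and> f (Suc n) = f n))"

definition lim_rel :: "('a \<Rightarrow> 'a \<Rightarrow> bool) \<Rightarrow> ('a \<Rightarrow> 'b::order) \<Rightarrow> 'a \<Rightarrow> 'b \<Rightarrow> bool" where
  "lim_rel R obs t p \<longleftrightarrow> (\<exists>f. max_seq R t f \<and> is_lub (range (obs \<circ> f)) p)"

definition Lim :: "('a \<Rightarrow> 'a \<Rightarrow> bool) \<Rightarrow> ('a \<Rightarrow> 'b::order) \<Rightarrow> 'a \<Rightarrow> 'b set" where
  "Lim R obs t = {p. lim_rel R obs t p}"

definition is_greatest :: "'b::order set \<Rightarrow> 'b \<Rightarrow> bool" where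
  "is_greatest X g \<longleftrightarrow> g \<in> X \<and> (\<forall>q\<in>X. q \<le> g)"

definition sem_defined :: "('a \<Rightarrow> 'a \<Rightarrow> bool) \<Rightarrow> ('a \<Rightarrow> 'b::order) \<Rightarrow> 'a \<Rightarrow> bool" where
  "sem_defined step obs t \<longleftrightarrow> (\<exists>g. is_greatest (Lim step obs t) g)"

definition sem :: "('a \<Rightarrow> 'a \<Rightarrow> bool) \<Rightarrow> ('a \<Rightarrow> 'b::order) \<Rightarrow> 'a \<Rightarrow> 'b" where
  "sem step obs t = (THE g. is_greatest (Lim step obs t) g)"

definition asympt_complete :: "('a \<Rightarrow> 'a \<Rightarrow> bool) \<Rightarrow> ('a \<Rightarrow> 'a \<Rightarrow> bool) \<Rightarrow> ('a \<Rightarrow> 'b::order) \<Rightarrow> bool" where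
  "asympt_complete sub step obs \<longleftrightarrow>
     (\<forall>u q. lim_rel step obs u q \<longrightarrow> (\<exists>p. lim_rel sub obs u p \<and> q \<le> p))"

end

theory Submission
  imports Defs
begin

(* Idea: a maximal \<rightsquigarrow>-sequence realising p can be continued, once it gets stuck in a
   \<rightsquigarrow>-normal form, to a maximal \<rightarrow>-sequence, whose limit therefore dominates p.
   Asymptotic completeness bounds every \<rightarrow>-limit by a \<rightsquigarrow>-limit, i.e. by p, so p is the
   greatest \<rightarrow>-limit.  Since observations increase along every \<rightsquigarrow>-sequence, each maximal
   \<rightsquigarrow>-sequence has a limit, which must be the unique element p. *)

lemma is_lub_mono:
  fixes p q :: "'b::order"
  assumes "is_lub X p" and "is_lub Y q" and "X \<subseteq> Y"
  shows "p \<le> q"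
  using assms unfolding is_lub_def by blast

lemma sem_eqI:
  assumes "is_greatest (Lim step obs t) p"
  shows "sem step obs t = p"
  unfolding sem_def
proof (rule the_equality)
  show "is_greatest (Lim step obs t) p" by (fact assms)
  show "g = p" if "is_greatest (Lim step obs t) g" for g
    using that assms unfolding is_greatest_def by (meson order_antisym)
qed

lemma max_seq_obs_mono:
  assumes "qars step obs" and "\<forall>x y. R x y \<longrightarrow> step x y" and "max_seq R t f"
  shows "obs (f n) \<le> obs (f (Suc n))"
  using assms unfolding qars_def max_seq_def by (metis order_refl)

lemma max_seq_has_lub:
  assumes "qars step obs" and "\<forall>x y. R x y \<longrightarrow> step x y" and "max_seq R t f"
  shows "\<exists>p. is_lub (range (obs \<circ> f)) p"
proof -
  have "\<forall>n. (obs \<circ> f) n \<le> (obs \<circ> f) (Suc n)"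
    using max_seq_obs_mono[OF assms] by simp
  then show ?thesis
    using assms(1) unfolding qars_def omega_cpo_def by blast
qed

lemma max_seq_exists: "\<exists>f. max_seq R t f"
proof -
  define f where "f = rec_nat t (\<lambda>_ x. if \<exists>y. R x y then SOME y. R x y else x)"
  have f_Suc: "f (Suc n) = (if \<exists>y. R (f n) y then SOME y. R (f n) y else f n)" for n
    unfolding f_def by (simp split del: if_split)
  have "max_seq R t f"
    unfolding max_seq_def normal_form_def
  proof (intro conjI allI)
    show "f 0 = t" by (simp add: f_def)
    show "R (f n) (f (Suc n)) \<or> \<not> (\<exists>y. R (f n) y) \<and> f (Suc n) = f n" for n
    proof (cases "\<exists>y. R (f n) y")
      case True
      then have "R (f n) (SOME y. R (f n) y)" by (rule someI_ex)
      then show ?thesis using True f_Suc[of n] by simp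
    next
      case False
      then show ?thesis using f_Suc[of n] by simp
    qed
  qed
  then show ?thesis by blast
qed

lemma max_seq_normal_form_stable:
  assumes "max_seq R t f" and "normal_form R (f N)" and "N \<le> n"
  shows "f n = f N"
  using assms(3)
proof (induction n rule: dec_induct)
  case (step n)
  then show ?case
    using assms(1,2) unfolding max_seq_def normal_form_def by metis
qed simp

lemma max_seq_extend:
  assumes f: "max_seq R t f" and R_S: "\<forall>x y. R x y \<longrightarrow> S x y"
  shows "\<exists>g. max_seq S t g \<and> range f \<subseteq> range g"
proof (cases "\<exists>N. normal_form R (f N)")
  case False
  then have "max_seq S t f" using f R_S unfolding max_seq_def by blast
  then show ?thesis by blast
next
  case True
  define N where "N = (LEAST N. normal_form R (f N))"
  have nf: "normal_form R (f N)"
    unfolding N_def using True by (metis LeastI)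
  have path: "R (f n) (f (Suc n))" if "n < N" for n
    using not_less_Least[of n "\<lambda>N. normal_form R (f N)"] that f
    unfolding N_def max_seq_def by blast
  obtain h where h: "max_seq S (f N) h" using max_seq_exists[of S "f N"] ..
  define g where "g n = (if n \<le> N then f n else h (n - N))" for n
  have g_tail: "g (N + k) = h k" for k
    using h by (cases k) (auto simp: g_def max_seq_def)
  have "max_seq S t g"
    unfolding max_seq_def
  proof (intro conjI allI)
    show "g 0 = t" using f by (simp add: g_def max_seq_def)
    show "S (g n) (g (Suc n)) \<or> normal_form S (g n) \<and> g (Suc n) = g n" for n
    proof (cases "n < N")
      case True
      then show ?thesis using path R_S by (simp add: g_def)
    next
      case False
      then obtain k where k: "n = N + k" using le_Suc_ex by (metis not_less)
      have "g n = h k" "g (Suc n) = h (Suc k)"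
        using g_tail[of k] g_tail[of "Suc k"] by (simp_all add: k)
      moreover have "S (h k) (h (Suc k)) \<or> normal_form S (h k) \<and> h (Suc k) = h k"
        using h unfolding max_seq_def by blast
      ultimately show ?thesis by simp
    qed
  qed
  moreover have "f n \<in> range g" for n
  proof (cases "n \<le> N")
    case True
    then show ?thesis by (metis g_def rangeI)
  next
    case False
    then have "f n = f N"
      using max_seq_normal_form_stable[OF f nf, of n] by simp
    also have "\<dots> = g N" by (simp add: g_def)
    finally show ?thesis by simp
  qed
  ultimately show ?thesis by blast
qed

lemma Lim_subrel_dominated:
  assumes "qars step obs" and "\<forall>x y. sub x y \<longrightarrow> step x y" and "p \<in> Lim sub obs t"
  shows "\<exists>q\<in>Lim step obs t. p \<le> q"
proof -
  obtain f where f: "max_seq sub t f" "is_lub (range (obs \<circ> f)) p"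
    using assms(3) unfolding Lim_def lim_rel_def by blast
  obtain g where g: "max_seq step t g" "range f \<subseteq> range g"
    using max_seq_extend[OF f(1) assms(2)] by blast
  obtain q where q: "is_lub (range (obs \<circ> g)) q"
    using max_seq_has_lub[OF assms(1) _ g(1)] by blast
  have "q \<in> Lim step obs t"
    using g(1) q unfolding Lim_def lim_rel_def by blast
  moreover have "range (obs \<circ> f) \<subseteq> range (obs \<circ> g)"
    using g(2) by (metis image_comp image_mono)
  then have "p \<le> q" using is_lub_mono[OF f(2) q] by blast
  ultimately show ?thesis by blast
qed

lemma is_greatest_Lim_if_Lim_subrel_singleton:
  assumes "qars step obs" and "\<forall>x y. sub x y \<longrightarrow> step x y"
    and "asympt_complete sub step obs" and "Lim sub obs t = {p}"
  shows "is_greatest (Lim step obs t) p"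
proof -
  have upper: "q \<le> p" if q: "q \<in> Lim step obs t" for q
  proof -
    obtain p' where "lim_rel sub obs t p'" "q \<le> p'"
      using q assms(3) unfolding asympt_complete_def Lim_def by blast
    moreover have "p' = p"
      using \<open>lim_rel sub obs t p'\<close> assms(4) unfolding Lim_def by (metis mem_Collect_eq singletonD)
    ultimately show ?thesis by simp
  qed
  obtain q where "q \<in> Lim step obs t" "p \<le> q"
    using Lim_subrel_dominated[OF assms(1,2)] assms(4) by blast
  then have "p \<in> Lim step obs t"
    using upper by (metis order_antisym)
  then show ?thesis
    using upper unfolding is_greatest_def by blast
qed

theorem mainTheorem1:
  fixes step sub :: "'a \<Rightarrow> 'a \<Rightarrow> bool" and obs :: "'a \<Rightarrow> 'b::order" and t :: 'a
  assumes "qars step obs"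
    and "\<forall>x y. sub x y \<longrightarrow> step x y"
    and "asympt_complete sub step obs"
    and "\<exists>p. Lim sub obs t = {p}"
  shows "sem_defined step obs t \<and>
         (\<forall>f. max_seq sub t f \<longrightarrow> is_lub (range (obs \<circ> f)) (sem step obs t))"
proof -
  obtain p where p: "Lim sub obs t = {p}" using assms(4) by blast
  have greatest: "is_greatest (Lim step obs t) p"
    using is_greatest_Lim_if_Lim_subrel_singleton[OF assms(1-3) p] .
  have "is_lub (range (obs \<circ> f)) p" if f: "max_seq sub t f" for f
  proof -
    obtain r where r: "is_lub (range (obs \<circ> f)) r"
      using max_seq_has_lub[OF assms(1,2) f] by blast
    then have "r \<in> Lim sub obs t"
      using f unfolding Lim_def lim_rel_def by blast
    then show ?thesis using r p by simp
  qed
  then show ?thesis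
    using greatest sem_eqI[OF greatest] unfolding sem_defined_def by auto
qed

end
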